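(* Let $R_1\leftarrow R_{12}\to R_2$ be a correspondence in $\mathrm{DGRings}^{0,-1}$. It is admissible if and only if the correspondence of underlying groupoids $\mathrm{Cone}(R_1)\leftarrow\mathrm{Cone}(R_{12})\to\mathrm{Cone}(R_2)$ in $\mathrm{Cats}'$ is admissible in the categorical sense.
   Context: Rings are commutative and unital. $\mathrm{DGRings}^{0,-1}$ is the category of commutative DG rings $R$ with $R^i=0$ for $i\ne0,-1$. Equivalently, such $R$ is a ring $C=R^0$, a $C$-module $I=R^{-1}$ and a $C$-linear $d:I\to C$ with $d(x)y=d(y)x$. Quasi-isomorphisms are morphisms inducing isomorphisms on $\ker d$ and $\operatorname{coker} d$. A correspondence $R_1\xleftarrow{f}R_{12}\xrightarrow{g}R_2$ in $\mathrm{DGRings}^{0,-1}$ is admissible if $f$ is a quasi-isomorphism and $R_{12}^{-1}\to R_1^{-1}\times R_2^{-1}$ is an isomorphism. $\mathrm{Cone}(R)$ is the groupoid whose set of objects is $C$ and whose morphisms are the pairs $(c,x)\in C\times I$, the pair being a morphism $c\to c+dx$. Composition is $(c+dx,y)\circ(c,x)=(c,x+y)$. A morphism of $\mathrm{DGRings}^{0,-1}$ induces a functor in the obvious way. $\mathrm{Cats}'$ is the naive 1-category of small categories, with functors on the nose. A correspondence $\mathcal{C}_1\leftarrow\mathcal{C}_{12}\to\mathcal{C}_2$ in $\mathrm{Cats}'$ is admissible in the categorical sense if it is isomorphic, as a correspondence (isomorphism of middle terms commuting on the nose with both legs), to $\mathcal{C}_1\leftarrow\mathrm{Graph}_\Phi\to\mathcal{C}_2$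 for some functor $\Phi:\mathcal{C}_1\to\mathcal{C}_2$. Here $\mathrm{Graph}_\Phi$ is the category of triples $(c_1,c_2,\psi:\Phi(c_1)\xrightarrow{\sim}c_2)$ with the projection functors. *)

theory Defs
  imports "HOL-Algebra.Module" "HOL-Algebra.RingHom"
begin

text \<open>A DG ring R in DGRings^{0,-1}: a commutative ring C = R^0 (deg0), a C-module
  I = R^{-1} (deg1) and a C-linear map d : I -> C (diff) with d(x) y = d(y) x.\<close>

record ('a, 'b) dgr =
  deg0 :: "'a ring"
  deg1 :: "('a, 'b) module"
  diff :: "'b \<Rightarrow> 'a"

definition dg_ring :: "('a, 'b) dgr \<Rightarrow> bool" where
  "dg_ring R \<longleftrightarrow>
     module (deg0 R) (deg1 R) \<and>
     (\<forall>x\<in>carrier (deg1 R). diff R x \<in> carrier (deg0 R)) \<and>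
     (\<forall>x\<in>carrier (deg1 R). \<forall>y\<in>carrier (deg1 R).
        diff R (x \<oplus>\<^bsub>deg1 R\<^esub> y) = diff R x \<oplus>\<^bsub>deg0 R\<^esub> diff R y) \<and>
     (\<forall>c\<in>carrier (deg0 R). \<forall>x\<in>carrier (deg1 R).
        diff R (smult (deg1 R) c x) = c \<otimes>\<^bsub>deg0 R\<^esub> diff R x) \<and>
     (\<forall>x\<in>carrier (deg1 R). \<forall>y\<in>carrier (deg1 R).
        smult (deg1 R) (diff R x) y = smult (deg1 R) (diff R y) x)"

definition dg_hom :: "('a, 'b) dgr \<Rightarrow> ('c, 'd) dgr \<Rightarrow> ('a \<Rightarrow> 'c) \<times> ('b \<Rightarrow> 'd) \<Rightarrow> bool" where
  "dg_hom R S f \<longleftrightarrow>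
     fst f \<in> ring_hom (deg0 R) (deg0 S) \<and>
     snd f \<in> carrier (deg1 R) \<rightarrow> carrier (deg1 S) \<and>
     (\<forall>x\<in>carrier (deg1 R). \<forall>y\<in>carrier (deg1 R).
        snd f (x \<oplus>\<^bsub>deg1 R\<^esub> y) = snd f x \<oplus>\<^bsub>deg1 S\<^esub> snd f y) \<and>
     (\<forall>c\<in>carrier (deg0 R). \<forall>x\<in>carrier (deg1 R).
        snd f (smult (deg1 R) c x) = smult (deg1 S) (fst f c) (snd f x)) \<and>
     (\<forall>x\<in>carrier (deg1 R). diff S (snd f x) = fst f (diff R x))"

text \<open>ker d and coker d = C / d(I) (the latter as the set of cosets c + d(I)).\<close>

definition dker :: "('a, 'b) dgr \<Rightarrow> 'b set" where
  "dker R = {x \<in> carrier (deg1 R). diff R x = \<zero>\<^bsub>deg0 R\<^esub>}"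

definition dcoset :: "('a, 'b) dgr \<Rightarrow> 'a \<Rightarrow> 'a set" where
  "dcoset R c = {c \<oplus>\<^bsub>deg0 R\<^esub> diff R x | x. x \<in> carrier (deg1 R)}"

definition coker :: "('a, 'b) dgr \<Rightarrow> 'a set set" where
  "coker R = dcoset R ` carrier (deg0 R)"

definition coker_map :: "('a, 'b) dgr \<Rightarrow> ('c, 'd) dgr \<Rightarrow> ('a \<Rightarrow> 'c) \<Rightarrow> 'a set \<Rightarrow> 'c set" where
  "coker_map R S f0 A =
     {f0 a \<oplus>\<^bsub>deg0 S\<^esub> diff S y | a y. a \<in> A \<and> y \<in> carrier (deg1 S)}"

definition dg_quasi_iso :: "('a, 'b) dgr \<Rightarrow> ('c, 'd) dgr \<Rightarrow> ('a \<Rightarrow> 'c) \<times> ('b \<Rightarrow> 'd) \<Rightarrow> bool" where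
  "dg_quasi_iso R S f \<longleftrightarrow>
     dg_hom R S f \<and>
     bij_betw (snd f) (dker R) (dker S) \<and>
     bij_betw (coker_map R S (fst f)) (coker R) (coker S)"

definition dg_admissible ::
  "('a, 'b) dgr \<Rightarrow> ('c, 'd) dgr \<Rightarrow> ('e, 'h) dgr \<Rightarrow>
   ('c \<Rightarrow> 'a) \<times> ('d \<Rightarrow> 'b) \<Rightarrow> ('c \<Rightarrow> 'e) \<times> ('d \<Rightarrow> 'h) \<Rightarrow> bool" where
  "dg_admissible R1 R12 R2 f g \<longleftrightarrow>
     dg_quasi_iso R12 R1 f \<and>
     bij_betw (\<lambda>x. (snd f x, snd g x)) (carrier (deg1 R12))
              (carrier (deg1 R1) \<times> carrier (deg1 R2))"

text \<open>Cmp C g f is the composite g o f (defined when Cod f = Dom g).\<close>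

record ('o, 'm) cat =
  Ob  :: "'o set"
  Ar  :: "'m set"
  Dom :: "'m \<Rightarrow> 'o"
  Cod :: "'m \<Rightarrow> 'o"
  Idn :: "'o \<Rightarrow> 'm"
  Cmp :: "'m \<Rightarrow> 'm \<Rightarrow> 'm"

type_synonym ('o, 'm, 'p, 'n) ftr = "('o \<Rightarrow> 'p) \<times> ('m \<Rightarrow> 'n)"

definition is_functor :: "('o, 'm) cat \<Rightarrow> ('p, 'n) cat \<Rightarrow> ('o, 'm, 'p, 'n) ftr \<Rightarrow> bool" where
  "is_functor C D F \<longleftrightarrow>
     (\<forall>a\<in>Ob C. fst F a \<in> Ob D) \<and>
     (\<forall>u\<in>Ar C. snd F u \<in> Ar D \<and> Dom D (snd F u) = fst F (Dom C u) \<and>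
                Cod D (snd F u) = fst F (Cod C u)) \<and>
     (\<forall>a\<in>Ob C. snd F (Idn C a) = Idn D (fst F a)) \<and>
     (\<forall>u\<in>Ar C. \<forall>v\<in>Ar C. Cod C u = Dom C v \<longrightarrow>
        snd F (Cmp C v u) = Cmp D (snd F v) (snd F u))"

definition fcomp :: "('p, 'n, 'q, 'k) ftr \<Rightarrow> ('o, 'm, 'p, 'n) ftr \<Rightarrow> ('o, 'm, 'q, 'k) ftr" where
  "fcomp G F = (fst G \<circ> fst F, snd G \<circ> snd F)"

text \<open>Equality of functors out of C (on the nose; functions compared on C only).\<close>

definition feq :: "('o, 'm) cat \<Rightarrow> ('o, 'm, 'p, 'n) ftr \<Rightarrow> ('o, 'm, 'p, 'n) ftr \<Rightarrow> bool" where
  "feq C F G \<longleftrightarrow> (\<forall>a\<in>Ob C. fst F a = fst G a) \<and> (\<forall>u\<in>Ar C. snd F u = snd G u)"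

definition cat_iso :: "('o, 'm) cat \<Rightarrow> ('p, 'n) cat \<Rightarrow> ('o, 'm, 'p, 'n) ftr \<Rightarrow> bool" where
  "cat_iso C D H \<longleftrightarrow> is_functor C D H \<and>
     (\<exists>K. is_functor D C K \<and> feq C (fcomp K H) (id, id) \<and> feq D (fcomp H K) (id, id))"

definition is_iso_arr :: "('o, 'm) cat \<Rightarrow> 'm \<Rightarrow> bool" where
  "is_iso_arr C u \<longleftrightarrow> u \<in> Ar C \<and>
     (\<exists>v\<in>Ar C. Dom C v = Cod C u \<and> Cod C v = Dom C u \<and>
        Cmp C v u = Idn C (Dom C u) \<and> Cmp C u v = Idn C (Cod C u))"

definition graph_ob :: "('o1, 'm1) cat \<Rightarrow> ('o2, 'm2) cat \<Rightarrow> ('o1, 'm1, 'o2, 'm2) ftr \<Rightarrow>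
    ('o1 \<times> 'o2 \<times> 'm2) set" where
  "graph_ob C1 C2 \<Phi> = {(c1, c2, \<psi>). c1 \<in> Ob C1 \<and> c2 \<in> Ob C2 \<and> is_iso_arr C2 \<psi> \<and>
       Dom C2 \<psi> = fst \<Phi> c1 \<and> Cod C2 \<psi> = c2}"

definition graph_cat :: "('o1, 'm1) cat \<Rightarrow> ('o2, 'm2) cat \<Rightarrow> ('o1, 'm1, 'o2, 'm2) ftr \<Rightarrow>
    ('o1 \<times> 'o2 \<times> 'm2, ('o1 \<times> 'o2 \<times> 'm2) \<times> ('o1 \<times> 'o2 \<times> 'm2) \<times> 'm1 \<times> 'm2) cat" where
  "graph_cat C1 C2 \<Phi> =
    \<lparr> Ob = graph_ob C1 C2 \<Phi>,
      Ar = {(s, t, a1, a2). s \<in> graph_ob C1 C2 \<Phi> \<and> t \<in> graph_ob C1 C2 \<Phi> \<and>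
              a1 \<in> Ar C1 \<and> a2 \<in> Ar C2 \<and>
              Dom C1 a1 = fst s \<and> Cod C1 a1 = fst t \<and>
              Dom C2 a2 = fst (snd s) \<and> Cod C2 a2 = fst (snd t) \<and>
              Cmp C2 (snd (snd t)) (snd \<Phi> a1) = Cmp C2 a2 (snd (snd s))},
      Dom = (\<lambda>(s, t, a1, a2). s),
      Cod = (\<lambda>(s, t, a1, a2). t),
      Idn = (\<lambda>s. (s, s, Idn C1 (fst s), Idn C2 (fst (snd s)))),
      Cmp = (\<lambda>(s', t', b1, b2) (s, t, a1, a2). (s, t', Cmp C1 b1 a1, Cmp C2 b2 a2)) \<rparr>"

definition graph_pr1 :: "('o1 \<times> 'o2 \<times> 'm2, ('o1 \<times> 'o2 \<times> 'm2) \<times> ('o1 \<times> 'o2 \<times> 'm2) \<times> 'm1 \<times> 'm2, 'o1, 'm1) ftr" where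
  "graph_pr1 = ((\<lambda>(c1, c2, \<psi>). c1), (\<lambda>(s, t, a1, a2). a1))"

definition graph_pr2 :: "('o1 \<times> 'o2 \<times> 'm2, ('o1 \<times> 'o2 \<times> 'm2) \<times> ('o1 \<times> 'o2 \<times> 'm2) \<times> 'm1 \<times> 'm2, 'o2, 'm2) ftr" where
  "graph_pr2 = ((\<lambda>(c1, c2, \<psi>). c2), (\<lambda>(s, t, a1, a2). a2))"

definition cat_admissible ::
  "('o1, 'm1) cat \<Rightarrow> ('o, 'm) cat \<Rightarrow> ('o2, 'm2) cat \<Rightarrow>
   ('o, 'm, 'o1, 'm1) ftr \<Rightarrow> ('o, 'm, 'o2, 'm2) ftr \<Rightarrow> bool" where
  "cat_admissible C1 C12 C2 P Q \<longleftrightarrow>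
     (\<exists>\<Phi>. is_functor C1 C2 \<Phi> \<and>
        (\<exists>H. cat_iso C12 (graph_cat C1 C2 \<Phi>) H \<and>
             feq C12 (fcomp graph_pr1 H) P \<and> feq C12 (fcomp graph_pr2 H) Q))"

definition Cone :: "('a, 'b) dgr \<Rightarrow> ('a, 'a \<times> 'b) cat" where
  "Cone R =
    \<lparr> Ob = carrier (deg0 R),
      Ar = carrier (deg0 R) \<times> carrier (deg1 R),
      Dom = (\<lambda>(c, x). c),
      Cod = (\<lambda>(c, x). c \<oplus>\<^bsub>deg0 R\<^esub> diff R x),
      Idn = (\<lambda>c. (c, \<zero>\<^bsub>deg1 R\<^esub>)),
      Cmp = (\<lambda>(c', y) (c, x). (c, x \<oplus>\<^bsub>deg1 R\<^esub> y)) \<rparr>"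

definition Cone_map :: "('a \<Rightarrow> 'c) \<times> ('b \<Rightarrow> 'd) \<Rightarrow> ('a, 'a \<times> 'b, 'c, 'c \<times> 'd) ftr" where
  "Cone_map f = (fst f, (\<lambda>(c, x). (fst f c, snd f x)))"

end

theory Submission
  imports Defs "HOL-Algebra.AbelCoset"
begin

(* Cone(R) is the action groupoid of I acting on C by translation along d: its set of
   components is coker d and every automorphism group is ker d. Hence f is a quasi-isomorphism
   iff Cone(f) is an equivalence, i.e. fully faithful and essentially surjective, and when f1 is
   onto, essential surjectivity just says that f0 is onto.
   In Graph_Phi an arrow is determined by its source and its two projections, and also by its
   source, target and first projection. Transported along an isomorphism Cone(R12) = Graph_Phi,
   this shows that I12 -> I1 x I2 is bijective, that Cone(f) is fully faithful and that f0 is onto.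
   Conversely, these three properties allow one to build Phi from a set-theoretic section of f0,
   together with an explicit isomorphism from Cone(R12) to Graph_Phi over both legs. *)

section \<open>Inverting bijective functors\<close>

text \<open>The record cat carries no category axioms; these closure conditions are all that is
  needed to invert a functor that is bijective on objects and on arrows.\<close>

definition cat_closed :: "('o, 'm) cat \<Rightarrow> bool" where
  "cat_closed C \<longleftrightarrow>
     (\<forall>u\<in>Ar C. Dom C u \<in> Ob C \<and> Cod C u \<in> Ob C) \<and>
     (\<forall>a\<in>Ob C. Idn C a \<in> Ar C) \<and>
     (\<forall>u\<in>Ar C. \<forall>v\<in>Ar C. Cod C u = Dom C v \<longrightarrow> Cmp C v u \<in> Ar C)"

lemma is_functor_inv_into:
  assumes closed: "cat_closed C" and H: "is_functor C D H"
    and ob: "bij_betw (fst H) (Ob C) (Ob D)" and ar: "bij_betw (snd H) (Ar C) (Ar D)"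
  shows "is_functor D C (inv_into (Ob C) (fst H), inv_into (Ar C) (snd H))"
    (is "is_functor D C ?K")
proof -
  have K_ob: "fst ?K (fst H a) = a" if "a \<in> Ob C" for a
    using ob that by (simp add: bij_betw_def)
  have K_ar: "snd ?K (snd H u) = u" if "u \<in> Ar C" for u
    using ar that by (simp add: bij_betw_def)
  have ob_cases: "\<exists>a\<in>Ob C. b = fst H a" if "b \<in> Ob D" for b
    using ob that by (auto simp: bij_betw_def)
  have ar_cases: "\<exists>u\<in>Ar C. v = snd H u" if "v \<in> Ar D" for v
    using ar that by (auto simp: bij_betw_def)
  show ?thesis
    unfolding is_functor_def
  proof (intro conjI ballI impI)
    fix b assume "b \<in> Ob D"
    then show "fst ?K b \<in> Ob C" using ob_cases K_ob by metis
  next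
    fix v assume "v \<in> Ar D"
    then obtain u where "u \<in> Ar C" "v = snd H u" using ar_cases by blast
    then show "snd ?K v \<in> Ar C" "Dom C (snd ?K v) = fst ?K (Dom D v)" "Cod C (snd ?K v) = fst ?K (Cod D v)"
      using H closed K_ar K_ob by (auto simp: is_functor_def cat_closed_def)
  next
    fix b assume "b \<in> Ob D"
    then obtain a where "a \<in> Ob C" "b = fst H a" using ob_cases by blast
    then show "snd ?K (Idn D b) = Idn C (fst ?K b)"
      using H closed K_ar K_ob by (metis is_functor_def cat_closed_def)
  next
    fix v w assume "v \<in> Ar D" "w \<in> Ar D" and vw: "Cod D v = Dom D w"
    then obtain u u' where u: "u \<in> Ar C" "v = snd H u" and u': "u' \<in> Ar C" "w = snd H u'"
      using ar_cases by blast
    have "Cod C u = Dom C u'"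
      using ob H closed u u' vw by (simp add: is_functor_def cat_closed_def bij_betw_def inj_on_def)
    then have "Cmp D w v = snd H (Cmp C u' u)" and "Cmp C u' u \<in> Ar C"
      using H closed u u' by (simp_all add: is_functor_def cat_closed_def)
    then show "snd ?K (Cmp D w v) = Cmp C (snd ?K w) (snd ?K v)"
      using K_ar u u' by simp
  qed
qed

lemma cat_iso_iff_bij:
  assumes "cat_closed C"
  shows "cat_iso C D H \<longleftrightarrow>
    is_functor C D H \<and> bij_betw (fst H) (Ob C) (Ob D) \<and> bij_betw (snd H) (Ar C) (Ar D)"
proof
  assume "cat_iso C D H"
  then obtain K where H: "is_functor C D H" and K: "is_functor D C K"
    and KH: "feq C (fcomp K H) (id, id)" and HK: "feq D (fcomp H K) (id, id)"
    unfolding cat_iso_def by blast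
  have "bij_betw (fst H) (Ob C) (Ob D)"
    by (rule bij_betw_byWitness[where f' = "fst K"])
      (use H K KH HK in \<open>auto simp: feq_def fcomp_def is_functor_def\<close>)
  moreover have "bij_betw (snd H) (Ar C) (Ar D)"
    by (rule bij_betw_byWitness[where f' = "snd K"])
      (use H K KH HK in \<open>auto simp: feq_def fcomp_def is_functor_def\<close>)
  ultimately show "is_functor C D H \<and> bij_betw (fst H) (Ob C) (Ob D) \<and> bij_betw (snd H) (Ar C) (Ar D)"
    using H by blast
next
  assume "is_functor C D H \<and> bij_betw (fst H) (Ob C) (Ob D) \<and> bij_betw (snd H) (Ar C) (Ar D)"
  then have H: "is_functor C D H" and ob: "bij_betw (fst H) (Ob C) (Ob D)"
    and ar: "bij_betw (snd H) (Ar C) (Ar D)" by auto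
  let ?K = "(inv_into (Ob C) (fst H), inv_into (Ar C) (snd H))"
  have "feq C (fcomp ?K H) (id, id)" and "feq D (fcomp H ?K) (id, id)"
    using ob ar by (simp_all add: feq_def fcomp_def bij_betw_def f_inv_into_f)
  with is_functor_inv_into[OF assms H ob ar] show "cat_iso C D H"
    using H unfolding cat_iso_def by blast
qed

lemma (in abelian_group) a_left_cancel:
  "\<lbrakk>x \<in> carrier G; y \<in> carrier G; z \<in> carrier G\<rbrakk> \<Longrightarrow> x \<oplus> y = x \<oplus> z \<longleftrightarrow> y = z"
  by (metis add.Units_eq add.Units_l_cancel)

locale dg =
  fixes R :: "('a, 'b) dgr"
  assumes dg_ring: "dg_ring R"
begin

sublocale C: abelian_group "deg0 R"
  using dg_ring unfolding dg_ring_def module_def cring_def ring_def by blast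

sublocale I: abelian_group "deg1 R"
  using dg_ring unfolding dg_ring_def module_def by blast

sublocale d: abelian_group_hom "deg1 R" "deg0 R" "diff R"
  using dg_ring unfolding dg_ring_def
  by (intro abelian_group_homI I.abelian_group_axioms C.abelian_group_axioms
      group_hom.intro group_hom_axioms.intro I.a_group C.a_group) (auto simp: hom_def)

lemma Cone_simps [simp]:
  "Ob (Cone R) = carrier (deg0 R)"
  "Ar (Cone R) = carrier (deg0 R) \<times> carrier (deg1 R)"
  "Dom (Cone R) (c, x) = c"
  "Cod (Cone R) (c, x) = c \<oplus>\<^bsub>deg0 R\<^esub> diff R x"
  "Idn (Cone R) c = (c, \<zero>\<^bsub>deg1 R\<^esub>)"
  "Cmp (Cone R) (c', y) (c, x) = (c, x \<oplus>\<^bsub>deg1 R\<^esub> y)"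
  by (simp_all add: Cone_def)

lemma cat_closed_Cone: "cat_closed (Cone R)"
  by (auto simp: cat_closed_def)

lemma is_iso_arr_Cone: "u \<in> Ar (Cone R) \<Longrightarrow> is_iso_arr (Cone R) u"
  unfolding is_iso_arr_def
  by (rule conjI, simp, rule bexI[of _ "(Cod (Cone R) u, \<ominus>\<^bsub>deg1 R\<^esub> snd u)"])
    (auto simp: C.a_assoc C.r_neg I.r_neg I.l_neg)

lemma dker_iff: "x \<in> dker R \<longleftrightarrow> x \<in> carrier (deg1 R) \<and> diff R x = \<zero>\<^bsub>deg0 R\<^esub>"
  unfolding dker_def by simp

lemma dcoset_iff:
  "z \<in> dcoset R c \<longleftrightarrow> (\<exists>x\<in>carrier (deg1 R). z = c \<oplus>\<^bsub>deg0 R\<^esub> diff R x)"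
  unfolding dcoset_def by blast

lemma self_in_dcoset: "c \<in> carrier (deg0 R) \<Longrightarrow> c \<in> dcoset R c"
  unfolding dcoset_iff by (intro bexI[of _ "\<zero>\<^bsub>deg1 R\<^esub>"]) simp_all

lemma dcoset_eq_iff:
  assumes "c \<in> carrier (deg0 R)" and "c' \<in> carrier (deg0 R)"
  shows "dcoset R c' = dcoset R c \<longleftrightarrow> (\<exists>x\<in>carrier (deg1 R). c' = c \<oplus>\<^bsub>deg0 R\<^esub> diff R x)"
proof
  assume "dcoset R c' = dcoset R c"
  with self_in_dcoset[OF assms(2)] have "c' \<in> dcoset R c" by simp
  then show "\<exists>x\<in>carrier (deg1 R). c' = c \<oplus>\<^bsub>deg0 R\<^esub> diff R x"
    unfolding dcoset_iff .
next
  assume "\<exists>x\<in>carrier (deg1 R). c' = c \<oplus>\<^bsub>deg0 R\<^esub> diff R x"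
  then obtain x where x: "x \<in> carrier (deg1 R)" and c': "c' = c \<oplus>\<^bsub>deg0 R\<^esub> diff R x" ..
  have fwd: "c' \<oplus>\<^bsub>deg0 R\<^esub> diff R y = c \<oplus>\<^bsub>deg0 R\<^esub> diff R (x \<oplus>\<^bsub>deg1 R\<^esub> y)"
    if "y \<in> carrier (deg1 R)" for y
    using assms x that by (simp add: c' C.a_assoc)
  have bwd: "c \<oplus>\<^bsub>deg0 R\<^esub> diff R y = c' \<oplus>\<^bsub>deg0 R\<^esub> diff R (\<ominus>\<^bsub>deg1 R\<^esub> x \<oplus>\<^bsub>deg1 R\<^esub> y)"
    if "y \<in> carrier (deg1 R)" for y
    using assms x that by (simp add: c' C.a_assoc C.r_neg2)
  show "dcoset R c' = dcoset R c"
    unfolding dcoset_def using x fwd bwd I.a_closed I.a_inv_closed by blast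
qed

end

section \<open>Quasi-isomorphisms as equivalences of cones\<close>

text \<open>An arrow c \<rightarrow> c' of Cone(R) is an x with c' = c + dx. So cone_fully_faithful says that
  Cone(h) is fully faithful, and cone_ess_surj that it is essentially surjective.\<close>

definition cone_fully_faithful ::
  "('a, 'b) dgr \<Rightarrow> ('c, 'd) dgr \<Rightarrow> ('a \<Rightarrow> 'c) \<times> ('b \<Rightarrow> 'd) \<Rightarrow> bool" where
  "cone_fully_faithful R S h \<longleftrightarrow>
     (\<forall>c\<in>carrier (deg0 R). \<forall>c'\<in>carrier (deg0 R). \<forall>y\<in>carrier (deg1 S).
        fst h c' = fst h c \<oplus>\<^bsub>deg0 S\<^esub> diff S y \<longrightarrow>
        (\<exists>!x. x \<in> carrier (deg1 R) \<and> snd h x = y \<and> c' = c \<oplus>\<^bsub>deg0 R\<^esub> diff R x))"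

definition cone_ess_surj ::
  "('a, 'b) dgr \<Rightarrow> ('c, 'd) dgr \<Rightarrow> ('a \<Rightarrow> 'c) \<times> ('b \<Rightarrow> 'd) \<Rightarrow> bool" where
  "cone_ess_surj R S h \<longleftrightarrow>
     (\<forall>c'\<in>carrier (deg0 S). \<exists>c\<in>carrier (deg0 R). \<exists>y\<in>carrier (deg1 S).
        c' = fst h c \<oplus>\<^bsub>deg0 S\<^esub> diff S y)"

locale dg_ring_hom = dom: dg R + cod: dg S
  for R :: "('a, 'b) dgr" and S :: "('c, 'd) dgr" +
  fixes h :: "('a \<Rightarrow> 'c) \<times> ('b \<Rightarrow> 'd)"
  assumes dg_hom: "dg_hom R S h"
begin

sublocale h0: abelian_group_hom "deg0 R" "deg0 S" "fst h"
  using dg_hom unfolding dg_hom_def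
  by (intro abelian_group_homI dom.C.abelian_group_axioms cod.C.abelian_group_axioms
      group_hom.intro group_hom_axioms.intro dom.C.a_group cod.C.a_group)
    (auto simp: hom_def ring_hom_closed ring_hom_add)

sublocale h1: abelian_group_hom "deg1 R" "deg1 S" "snd h"
  using dg_hom unfolding dg_hom_def
  by (intro abelian_group_homI dom.I.abelian_group_axioms cod.I.abelian_group_axioms
      group_hom.intro group_hom_axioms.intro dom.I.a_group cod.I.a_group)
    (auto simp: hom_def)

lemma diff_hom [simp]: "x \<in> carrier (deg1 R) \<Longrightarrow> diff S (snd h x) = fst h (diff R x)"
  using dg_hom unfolding dg_hom_def by blast

lemma coker_map_dcoset:
  assumes c: "c \<in> carrier (deg0 R)"
  shows "coker_map R S (fst h) (dcoset R c) = dcoset S (fst h c)"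
proof (intro equalityI subsetI)
  fix z assume "z \<in> coker_map R S (fst h) (dcoset R c)"
  then obtain x y where x: "x \<in> carrier (deg1 R)" and y: "y \<in> carrier (deg1 S)"
    and z: "z = fst h (c \<oplus>\<^bsub>deg0 R\<^esub> diff R x) \<oplus>\<^bsub>deg0 S\<^esub> diff S y"
    unfolding coker_map_def dom.dcoset_iff by blast
  have "z = fst h c \<oplus>\<^bsub>deg0 S\<^esub> diff S (snd h x \<oplus>\<^bsub>deg1 S\<^esub> y)"
    using c x y by (simp add: z cod.C.a_assoc)
  with x y show "z \<in> dcoset S (fst h c)"
    unfolding cod.dcoset_iff by (intro bexI[of _ "snd h x \<oplus>\<^bsub>deg1 S\<^esub> y"]) simp_all
next
  fix z assume "z \<in> dcoset S (fst h c)"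
  with c dom.self_in_dcoset show "z \<in> coker_map R S (fst h) (dcoset R c)"
    unfolding coker_map_def cod.dcoset_iff by blast
qed

lemma faithful_if_inj_on_dker:
  assumes inj: "inj_on (snd h) (dker R)"
    and x: "x \<in> carrier (deg1 R)" and x': "x' \<in> carrier (deg1 R)"
    and eq1: "snd h x = snd h x'" and eq0: "diff R x = diff R x'"
  shows "x = x'"
proof -
  have "x \<oplus>\<^bsub>deg1 R\<^esub> \<ominus>\<^bsub>deg1 R\<^esub> x' \<in> dker R" "\<zero>\<^bsub>deg1 R\<^esub> \<in> dker R"
    using x x' eq0 by (simp_all add: dom.dker_iff dom.C.r_neg)
  moreover have "snd h (x \<oplus>\<^bsub>deg1 R\<^esub> \<ominus>\<^bsub>deg1 R\<^esub> x') = snd h \<zero>\<^bsub>deg1 R\<^esub>"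
    using x x' eq1 by (simp add: cod.I.r_neg)
  ultimately have "x \<oplus>\<^bsub>deg1 R\<^esub> \<ominus>\<^bsub>deg1 R\<^esub> x' = \<zero>\<^bsub>deg1 R\<^esub>"
    by (rule inj_onD[OF inj, rotated])
  then show "x = x'"
    using x x' by (metis dom.I.add.inv_closed dom.I.minus_equality dom.I.minus_minus)
qed

lemma cone_full_if_quasi_iso:
  assumes ker: "dker S \<subseteq> snd h ` dker R" and coker: "inj_on (coker_map R S (fst h)) (coker R)"
    and c: "c \<in> carrier (deg0 R)" and c': "c' \<in> carrier (deg0 R)" and y: "y \<in> carrier (deg1 S)"
    and e: "fst h c' = fst h c \<oplus>\<^bsub>deg0 S\<^esub> diff S y"
  shows "\<exists>x\<in>carrier (deg1 R). snd h x = y \<and> c' = c \<oplus>\<^bsub>deg0 R\<^esub> diff R x"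
proof -
  have "coker_map R S (fst h) (dcoset R c') = coker_map R S (fst h) (dcoset R c)"
    using c c' y e cod.dcoset_eq_iff[of "fst h c" "fst h c'"] by (auto simp: coker_map_dcoset)
  then have "dcoset R c' = dcoset R c"
    using coker c c' unfolding coker_def by (auto dest: inj_onD)
  then obtain x0 where x0: "x0 \<in> carrier (deg1 R)" and c'_eq: "c' = c \<oplus>\<^bsub>deg0 R\<^esub> diff R x0"
    using dom.dcoset_eq_iff c c' by blast
  have "fst h c \<oplus>\<^bsub>deg0 S\<^esub> diff S (snd h x0) = fst h c \<oplus>\<^bsub>deg0 S\<^esub> diff S y"
    using e c x0 by (simp add: c'_eq)
  then have "diff S (snd h x0) = diff S y"
    using c x0 y by (simp add: cod.C.a_left_cancel)
  then have "\<ominus>\<^bsub>deg1 S\<^esub> snd h x0 \<oplus>\<^bsub>deg1 S\<^esub> y \<in> dker S"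
    using x0 y by (simp add: cod.dker_iff cod.C.l_neg)
  then have "\<ominus>\<^bsub>deg1 S\<^esub> snd h x0 \<oplus>\<^bsub>deg1 S\<^esub> y \<in> snd h ` dker R"
    by (rule subsetD[OF ker])
  then obtain k where k: "k \<in> dker R" "\<ominus>\<^bsub>deg1 S\<^esub> snd h x0 \<oplus>\<^bsub>deg1 S\<^esub> y = snd h k"
    by (rule imageE)
  have "snd h (x0 \<oplus>\<^bsub>deg1 R\<^esub> k) = y" "c' = c \<oplus>\<^bsub>deg0 R\<^esub> diff R (x0 \<oplus>\<^bsub>deg1 R\<^esub> k)"
    using k x0 y c by (simp_all add: dom.dker_iff c'_eq cod.I.r_neg2 flip: k(2))
  moreover have "x0 \<oplus>\<^bsub>deg1 R\<^esub> k \<in> carrier (deg1 R)"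
    using k x0 by (simp add: dom.dker_iff)
  ultimately show ?thesis
    by blast
qed

lemma cone_fully_faithful_if_quasi_iso:
  assumes ker: "bij_betw (snd h) (dker R) (dker S)"
    and coker: "inj_on (coker_map R S (fst h)) (coker R)"
  shows "cone_fully_faithful R S h"
  unfolding cone_fully_faithful_def
proof (intro ballI impI ex_ex1I)
  fix c c' y
  assume c: "c \<in> carrier (deg0 R)" and c': "c' \<in> carrier (deg0 R)" and y: "y \<in> carrier (deg1 S)"
    and e: "fst h c' = fst h c \<oplus>\<^bsub>deg0 S\<^esub> diff S y"
  have "dker S \<subseteq> snd h ` dker R"
    using ker by (simp add: bij_betw_def)
  from cone_full_if_quasi_iso[OF this coker c c' y e]
  show "\<exists>x. x \<in> carrier (deg1 R) \<and> snd h x = y \<and> c' = c \<oplus>\<^bsub>deg0 R\<^esub> diff R x"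
    by blast
  fix x x'
  assume x: "x \<in> carrier (deg1 R) \<and> snd h x = y \<and> c' = c \<oplus>\<^bsub>deg0 R\<^esub> diff R x"
    and x': "x' \<in> carrier (deg1 R) \<and> snd h x' = y \<and> c' = c \<oplus>\<^bsub>deg0 R\<^esub> diff R x'"
  then have "c \<oplus>\<^bsub>deg0 R\<^esub> diff R x = c \<oplus>\<^bsub>deg0 R\<^esub> diff R x'"
    by simp
  then have "diff R x = diff R x'"
    using c x x' by (simp add: dom.C.a_left_cancel)
  then show "x = x'"
    using faithful_if_inj_on_dker ker x x' by (simp add: bij_betw_def)
qed

lemma dker_bij_if_cone_fully_faithful:
  assumes ff: "cone_fully_faithful R S h"
  shows "bij_betw (snd h) (dker R) (dker S)"
proof -
  let ?z = "\<zero>\<^bsub>deg0 R\<^esub>"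
  have endo: "\<exists>!x. x \<in> carrier (deg1 R) \<and> snd h x = k \<and> ?z = ?z \<oplus>\<^bsub>deg0 R\<^esub> diff R x"
    if "k \<in> dker S" for k
    using ff that unfolding cone_fully_faithful_def by (simp add: cod.dker_iff)
  show ?thesis
  proof (rule bij_betwI')
    fix x x' assume "x \<in> dker R" "x' \<in> dker R"
    then show "(snd h x = snd h x') = (x = x')"
      using endo[of "snd h x"] by (auto simp: dom.dker_iff cod.dker_iff)
  next
    fix x assume "x \<in> dker R"
    then show "snd h x \<in> dker S" by (simp add: dom.dker_iff cod.dker_iff)
  next
    fix k assume "k \<in> dker S"
    then show "\<exists>x\<in>dker R. k = snd h x"
      using endo[of k] by (auto simp: dom.dker_iff)
  qed
qed

lemma coker_bij_if_cone_equivalence: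
  assumes ff: "cone_fully_faithful R S h" and es: "cone_ess_surj R S h"
  shows "bij_betw (coker_map R S (fst h)) (coker R) (coker S)"
proof (rule bij_betwI')
  fix A B assume "A \<in> coker R" "B \<in> coker R"
  then obtain c c' where c: "c \<in> carrier (deg0 R)" "A = dcoset R c"
    and c': "c' \<in> carrier (deg0 R)" "B = dcoset R c'" unfolding coker_def by blast
  show "(coker_map R S (fst h) A = coker_map R S (fst h) B) = (A = B)"
  proof
    assume "coker_map R S (fst h) A = coker_map R S (fst h) B"
    then have "dcoset S (fst h c') = dcoset S (fst h c)"
      using c c' by (simp add: coker_map_dcoset)
    then obtain y where "y \<in> carrier (deg1 S)" "fst h c' = fst h c \<oplus>\<^bsub>deg0 S\<^esub> diff S y"
      using c c' cod.dcoset_eq_iff by auto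
    then have "\<exists>x\<in>carrier (deg1 R). c' = c \<oplus>\<^bsub>deg0 R\<^esub> diff R x"
      using ff c c' unfolding cone_fully_faithful_def by blast
    then have "dcoset R c' = dcoset R c"
      using dom.dcoset_eq_iff[OF c(1) c'(1)] by blast
    then show "A = B"
      using c c' by simp
  qed simp
next
  fix A assume "A \<in> coker R"
  then show "coker_map R S (fst h) A \<in> coker S"
    unfolding coker_def by (auto simp: coker_map_dcoset)
next
  fix B assume "B \<in> coker S"
  then obtain c1 where c1: "c1 \<in> carrier (deg0 S)" "B = dcoset S c1"
    unfolding coker_def by blast
  then obtain c y where c: "c \<in> carrier (deg0 R)" and "y \<in> carrier (deg1 S)"
    and "c1 = fst h c \<oplus>\<^bsub>deg0 S\<^esub> diff S y"
    using es unfolding cone_ess_surj_def by blast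
  then have "B = coker_map R S (fst h) (dcoset R c)"
    using c1 cod.dcoset_eq_iff by (auto simp: coker_map_dcoset)
  then show "\<exists>A\<in>coker R. B = coker_map R S (fst h) A"
    using c unfolding coker_def by blast
qed

lemma quasi_iso_iff_cone_equivalence:
  "dg_quasi_iso R S h \<longleftrightarrow> cone_fully_faithful R S h \<and> cone_ess_surj R S h"
proof
  assume qi: "dg_quasi_iso R S h"
  then have "cone_fully_faithful R S h"
    by (intro cone_fully_faithful_if_quasi_iso) (auto simp: dg_quasi_iso_def bij_betw_def)
  moreover have "cone_ess_surj R S h"
    unfolding cone_ess_surj_def
  proof
    fix c1 assume c1: "c1 \<in> carrier (deg0 S)"
    then have "dcoset S c1 \<in> coker_map R S (fst h) ` coker R"
      using qi unfolding dg_quasi_iso_def bij_betw_def coker_def by auto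
    then obtain c where c: "c \<in> carrier (deg0 R)" and "dcoset S c1 = dcoset S (fst h c)"
      unfolding coker_def by (auto simp: coker_map_dcoset)
    then show "\<exists>c\<in>carrier (deg0 R). \<exists>y\<in>carrier (deg1 S). c1 = fst h c \<oplus>\<^bsub>deg0 S\<^esub> diff S y"
      using c1 cod.dcoset_eq_iff by auto
  qed
  ultimately show "cone_fully_faithful R S h \<and> cone_ess_surj R S h" ..
next
  assume "cone_fully_faithful R S h \<and> cone_ess_surj R S h"
  then show "dg_quasi_iso R S h"
    unfolding dg_quasi_iso_def
    using dg_hom dker_bij_if_cone_fully_faithful coker_bij_if_cone_equivalence by blast
qed

end

lemma (in dg_ring_hom) cone_ess_surj_iff_surj:
  assumes "snd h ` carrier (deg1 R) = carrier (deg1 S)"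
  shows "cone_ess_surj R S h \<longleftrightarrow> fst h ` carrier (deg0 R) = carrier (deg0 S)"
proof
  assume es: "cone_ess_surj R S h"
  have "c' \<in> fst h ` carrier (deg0 R)" if c': "c' \<in> carrier (deg0 S)" for c'
  proof -
    obtain c y where c: "c \<in> carrier (deg0 R)" and y: "y \<in> carrier (deg1 S)"
      and c'_eq: "c' = fst h c \<oplus>\<^bsub>deg0 S\<^esub> diff S y"
      using es c' unfolding cone_ess_surj_def by blast
    obtain x where x: "x \<in> carrier (deg1 R)" "y = snd h x"
      using assms y by blast
    have "c' = fst h (c \<oplus>\<^bsub>deg0 R\<^esub> diff R x)"
      using c x by (simp add: c'_eq)
    moreover have "c \<oplus>\<^bsub>deg0 R\<^esub> diff R x \<in> carrier (deg0 R)"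
      using c x by simp
    ultimately show ?thesis
      by (rule image_eqI)
  qed
  then show "fst h ` carrier (deg0 R) = carrier (deg0 S)"
    using h0.hom_closed by blast
next
  assume "fst h ` carrier (deg0 R) = carrier (deg0 S)"
  then show "cone_ess_surj R S h"
    unfolding cone_ess_surj_def
    by (metis cod.I.zero_closed cod.d.hom_zero cod.C.r_zero image_iff)
qed

locale dg_corr = F: dg_ring_hom R12 R1 f + G: dg_ring_hom R12 R2 g
  for R1 :: "('a, 'b) dgr" and R12 :: "('c, 'd) dgr" and R2 :: "('e, 'h) dgr"
    and f :: "('c \<Rightarrow> 'a) \<times> ('d \<Rightarrow> 'b)" and g :: "('c \<Rightarrow> 'e) \<times> ('d \<Rightarrow> 'h)"
begin

lemma dg_admissible_iff:
  "dg_admissible R1 R12 R2 f g \<longleftrightarrow>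
     cone_fully_faithful R12 R1 f \<and> fst f ` carrier (deg0 R12) = carrier (deg0 R1) \<and>
     bij_betw (\<lambda>x. (snd f x, snd g x)) (carrier (deg1 R12)) (carrier (deg1 R1) \<times> carrier (deg1 R2))"
proof -
  have "snd f ` carrier (deg1 R12) = carrier (deg1 R1)"
    if "bij_betw (\<lambda>x. (snd f x, snd g x)) (carrier (deg1 R12)) (carrier (deg1 R1) \<times> carrier (deg1 R2))"
  proof -
    have "carrier (deg1 R2) \<noteq> {}"
      using G.cod.I.zero_closed by blast
    then have "fst ` (\<lambda>x. (snd f x, snd g x)) ` carrier (deg1 R12) = carrier (deg1 R1)"
      using that unfolding bij_betw_def by simp
    then show ?thesis
      by (simp add: image_image)
  qed
  then show ?thesis
    unfolding dg_admissible_def F.quasi_iso_iff_cone_equivalence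
    using F.cone_ess_surj_iff_surj by blast
qed

end

section \<open>The graph of a functor between cones\<close>

lemma graph_cat_simps [simp]:
  "Ob (graph_cat C1 C2 \<Phi>) = graph_ob C1 C2 \<Phi>"
  "Dom (graph_cat C1 C2 \<Phi>) (s, t, a1, a2) = s"
  "Cod (graph_cat C1 C2 \<Phi>) (s, t, a1, a2) = t"
  "Idn (graph_cat C1 C2 \<Phi>) s = (s, s, Idn C1 (fst s), Idn C2 (fst (snd s)))"
  "Cmp (graph_cat C1 C2 \<Phi>) (s', t', b1, b2) (s, t, a1, a2) = (s, t', Cmp C1 b1 a1, Cmp C2 b2 a2)"
  by (simp_all add: graph_cat_def)

lemma Ar_graph_cat:
  "(s, t, a1, a2) \<in> Ar (graph_cat C1 C2 \<Phi>) \<longleftrightarrow>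
     s \<in> graph_ob C1 C2 \<Phi> \<and> t \<in> graph_ob C1 C2 \<Phi> \<and> a1 \<in> Ar C1 \<and> a2 \<in> Ar C2 \<and>
     Dom C1 a1 = fst s \<and> Cod C1 a1 = fst t \<and>
     Dom C2 a2 = fst (snd s) \<and> Cod C2 a2 = fst (snd t) \<and>
     Cmp C2 (snd (snd t)) (snd \<Phi> a1) = Cmp C2 a2 (snd (snd s))"
  by (simp add: graph_cat_def)

locale cone_functor = dom: dg R1 + cod: dg R2
  for R1 :: "('a, 'b) dgr" and R2 :: "('e, 'h) dgr" +
  fixes \<Phi> :: "('a, 'a \<times> 'b, 'e, 'e \<times> 'h) ftr"
  assumes is_functor_Phi: "is_functor (Cone R1) (Cone R2) \<Phi>"
begin

abbreviation "Gr \<equiv> graph_cat (Cone R1) (Cone R2) \<Phi>"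

definition Phi_arr :: "'a \<Rightarrow> 'b \<Rightarrow> 'h" where
  "Phi_arr c1 x1 = snd (snd \<Phi> (c1, x1))"

text \<open>An object (c1, c2, \<psi>) of the graph has \<psi> = (\<Phi> c1, y) : \<Phi> c1 \<rightarrow> c2 for some y, and
  c2 = \<Phi> c1 + dy is then determined by c1 and y.\<close>

definition graph_point :: "'a \<Rightarrow> 'h \<Rightarrow> 'a \<times> 'e \<times> 'e \<times> 'h" where
  "graph_point c1 y = (c1, fst \<Phi> c1 \<oplus>\<^bsub>deg0 R2\<^esub> diff R2 y, (fst \<Phi> c1, y))"

lemma Phi_ob_closed [simp]: "c1 \<in> carrier (deg0 R1) \<Longrightarrow> fst \<Phi> c1 \<in> carrier (deg0 R2)"
  using is_functor_Phi unfolding is_functor_def by simp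

lemma Phi_arr:
  assumes "c1 \<in> carrier (deg0 R1)" and "x1 \<in> carrier (deg1 R1)"
  shows "snd \<Phi> (c1, x1) = (fst \<Phi> c1, Phi_arr c1 x1)"
    and "Phi_arr c1 x1 \<in> carrier (deg1 R2)"
    and "fst \<Phi> (c1 \<oplus>\<^bsub>deg0 R1\<^esub> diff R1 x1) = fst \<Phi> c1 \<oplus>\<^bsub>deg0 R2\<^esub> diff R2 (Phi_arr c1 x1)"
proof -
  have "snd \<Phi> (c1, x1) \<in> Ar (Cone R2)" "Dom (Cone R2) (snd \<Phi> (c1, x1)) = fst \<Phi> c1"
    "Cod (Cone R2) (snd \<Phi> (c1, x1)) = fst \<Phi> (c1 \<oplus>\<^bsub>deg0 R1\<^esub> diff R1 x1)"
    using is_functor_Phi assms unfolding is_functor_def by force+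
  then show "snd \<Phi> (c1, x1) = (fst \<Phi> c1, Phi_arr c1 x1)"
    and "Phi_arr c1 x1 \<in> carrier (deg1 R2)"
    and "fst \<Phi> (c1 \<oplus>\<^bsub>deg0 R1\<^esub> diff R1 x1) = fst \<Phi> c1 \<oplus>\<^bsub>deg0 R2\<^esub> diff R2 (Phi_arr c1 x1)"
    unfolding Phi_arr_def by (cases "snd \<Phi> (c1, x1)"; simp)+
qed

lemma graph_point_eq_iff [simp]: "graph_point c1 y = graph_point c1' y' \<longleftrightarrow> c1 = c1' \<and> y = y'"
  unfolding graph_point_def by auto

lemma graph_point_in_graph_ob:
  "c1 \<in> carrier (deg0 R1) \<Longrightarrow> y \<in> carrier (deg1 R2) \<Longrightarrow> graph_point c1 y \<in> graph_ob (Cone R1) (Cone R2) \<Phi>"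
  unfolding graph_point_def graph_ob_def by (auto intro: cod.is_iso_arr_Cone)

lemma graph_ob_cases:
  assumes "s \<in> graph_ob (Cone R1) (Cone R2) \<Phi>"
  obtains c1 y where "c1 \<in> carrier (deg0 R1)" "y \<in> carrier (deg1 R2)" "s = graph_point c1 y"
proof -
  obtain c1 c2 \<psi> where s: "s = (c1, c2, \<psi>)" by (cases s)
  have "c1 \<in> carrier (deg0 R1)" "\<psi> \<in> Ar (Cone R2)"
    "Dom (Cone R2) \<psi> = fst \<Phi> c1" "Cod (Cone R2) \<psi> = c2"
    using assms unfolding s graph_ob_def is_iso_arr_def by auto
  then show thesis
    using that unfolding s graph_point_def by (cases \<psi>) auto
qed

text \<open>The last conjunct is the commuting square \<psi>' \<circ> \<Phi>(a1) = a2 \<circ> \<psi>, read off in I2.\<close>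

lemma graph_arrow_iff:
  assumes c1: "c1 \<in> carrier (deg0 R1)" and y: "y \<in> carrier (deg1 R2)"
    and c1': "c1' \<in> carrier (deg0 R1)" and y': "y' \<in> carrier (deg1 R2)"
  shows "(graph_point c1 y, graph_point c1' y', a1, a2) \<in> Ar Gr \<longleftrightarrow>
    (\<exists>x1\<in>carrier (deg1 R1). \<exists>x2\<in>carrier (deg1 R2).
       a1 = (c1, x1) \<and> a2 = (fst \<Phi> c1 \<oplus>\<^bsub>deg0 R2\<^esub> diff R2 y, x2) \<and>
       c1' = c1 \<oplus>\<^bsub>deg0 R1\<^esub> diff R1 x1 \<and>
       Phi_arr c1 x1 \<oplus>\<^bsub>deg1 R2\<^esub> y' = y \<oplus>\<^bsub>deg1 R2\<^esub> x2)"
    (is "?arrow \<longleftrightarrow> ?data")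
proof
  assume ?arrow
  then show ?data
    using c1 y y' Phi_arr[OF c1]
    unfolding Ar_graph_cat graph_point_def by (cases a1; cases a2) auto
next
  assume ?data
  then obtain x1 x2 where x1: "x1 \<in> carrier (deg1 R1)" and x2: "x2 \<in> carrier (deg1 R2)"
    and a: "a1 = (c1, x1)" "a2 = (fst \<Phi> c1 \<oplus>\<^bsub>deg0 R2\<^esub> diff R2 y, x2)"
    and c1'_eq: "c1' = c1 \<oplus>\<^bsub>deg0 R1\<^esub> diff R1 x1"
    and comm: "Phi_arr c1 x1 \<oplus>\<^bsub>deg1 R2\<^esub> y' = y \<oplus>\<^bsub>deg1 R2\<^esub> x2" by blast
  note Phi = Phi_arr[OF c1 x1]
  have "fst \<Phi> c1' \<oplus>\<^bsub>deg0 R2\<^esub> diff R2 y' =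
      fst \<Phi> c1 \<oplus>\<^bsub>deg0 R2\<^esub> diff R2 (Phi_arr c1 x1 \<oplus>\<^bsub>deg1 R2\<^esub> y')"
    using c1 y' Phi by (simp add: c1'_eq cod.C.a_assoc)
  also have "\<dots> = (fst \<Phi> c1 \<oplus>\<^bsub>deg0 R2\<^esub> diff R2 y) \<oplus>\<^bsub>deg0 R2\<^esub> diff R2 x2"
    using c1 y x2 by (simp only: comm) (simp add: cod.C.a_assoc)
  finally show ?arrow
    using graph_point_in_graph_ob[OF c1 y] graph_point_in_graph_ob[OF c1' y'] c1 y x1 x2 Phi comm
    unfolding Ar_graph_cat by (simp add: graph_point_def a c1'_eq)
qed

lemma graph_arrow_target_unique:
  assumes "(s, t, a1, a2) \<in> Ar Gr" and "(s, t', a1, a2) \<in> Ar Gr"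
  shows "t = t'"
proof -
  have "s \<in> graph_ob (Cone R1) (Cone R2) \<Phi>" "t \<in> graph_ob (Cone R1) (Cone R2) \<Phi>"
    "t' \<in> graph_ob (Cone R1) (Cone R2) \<Phi>"
    using assms unfolding Ar_graph_cat by auto
  then obtain c1 y c1' y' c1'' y'' where
    pts: "c1 \<in> carrier (deg0 R1)" "y \<in> carrier (deg1 R2)" "s = graph_point c1 y"
      "c1' \<in> carrier (deg0 R1)" "y' \<in> carrier (deg1 R2)" "t = graph_point c1' y'"
      "c1'' \<in> carrier (deg0 R1)" "y'' \<in> carrier (deg1 R2)" "t' = graph_point c1'' y''"
    by (metis graph_ob_cases)
  obtain x1 x2 where x1: "x1 \<in> carrier (deg1 R1)" and "x2 \<in> carrier (deg1 R2)"
    and "c1' = c1 \<oplus>\<^bsub>deg0 R1\<^esub> diff R1 x1" "c1'' = c1 \<oplus>\<^bsub>deg0 R1\<^esub> diff R1 x1"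
    and "Phi_arr c1 x1 \<oplus>\<^bsub>deg1 R2\<^esub> y' = y \<oplus>\<^bsub>deg1 R2\<^esub> x2"
      "Phi_arr c1 x1 \<oplus>\<^bsub>deg1 R2\<^esub> y'' = y \<oplus>\<^bsub>deg1 R2\<^esub> x2"
    using assms pts graph_arrow_iff by auto
  then have "c1' = c1''" "Phi_arr c1 x1 \<oplus>\<^bsub>deg1 R2\<^esub> y' = Phi_arr c1 x1 \<oplus>\<^bsub>deg1 R2\<^esub> y''"
    by simp_all
  then show ?thesis
    using pts Phi_arr(2)[OF pts(1) x1] by (simp add: cod.I.a_left_cancel)
qed

lemma graph_arrow_snd_unique:
  assumes "(s, t, a1, a2) \<in> Ar Gr" and "(s, t, a1, a2') \<in> Ar Gr"
  shows "a2 = a2'"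
proof -
  have "s \<in> graph_ob (Cone R1) (Cone R2) \<Phi>" "t \<in> graph_ob (Cone R1) (Cone R2) \<Phi>"
    using assms unfolding Ar_graph_cat by auto
  then obtain c1 y c1' y' where
    pts: "c1 \<in> carrier (deg0 R1)" "y \<in> carrier (deg1 R2)" "s = graph_point c1 y"
      "c1' \<in> carrier (deg0 R1)" "y' \<in> carrier (deg1 R2)" "t = graph_point c1' y'"
    by (metis graph_ob_cases)
  obtain x2 x2' where "x2 \<in> carrier (deg1 R2)" "x2' \<in> carrier (deg1 R2)"
    "a2 = (fst \<Phi> c1 \<oplus>\<^bsub>deg0 R2\<^esub> diff R2 y, x2)" "a2' = (fst \<Phi> c1 \<oplus>\<^bsub>deg0 R2\<^esub> diff R2 y, x2')"
    "y \<oplus>\<^bsub>deg1 R2\<^esub> x2 = y \<oplus>\<^bsub>deg1 R2\<^esub> x2'"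
    using assms pts graph_arrow_iff by auto
  then show ?thesis
    using pts by (simp add: cod.I.a_left_cancel)
qed

end

section \<open>An isomorphism with a graph makes the correspondence admissible\<close>

locale graph_corr = dg_corr R1 R12 R2 f g + cone_functor R1 R2 \<Phi>
  for R1 R12 R2 f g \<Phi> +
  fixes H
  assumes iso: "cat_iso (Cone R12) Gr H"
    and pr1: "feq (Cone R12) (fcomp graph_pr1 H) (Cone_map f)"
    and pr2: "feq (Cone R12) (fcomp graph_pr2 H) (Cone_map g)"
begin

lemma H_functor: "is_functor (Cone R12) Gr H"
  and H_ob_bij: "bij_betw (fst H) (carrier (deg0 R12)) (graph_ob (Cone R1) (Cone R2) \<Phi>)"
  and H_ar_bij: "bij_betw (snd H) (Ar (Cone R12)) (Ar Gr)"
  using iso unfolding cat_iso_iff_bij[OF F.dom.cat_closed_Cone] by simp_all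

lemma H_ob_cases:
  assumes c: "c \<in> carrier (deg0 R12)"
  obtains y where "y \<in> carrier (deg1 R2)" "fst H c = graph_point (fst f c) y"
proof -
  have "fst H c \<in> graph_ob (Cone R1) (Cone R2) \<Phi>"
    using H_ob_bij c by (rule bij_betw_apply)
  then obtain c1 y where y: "y \<in> carrier (deg1 R2)" and Hc: "fst H c = graph_point c1 y"
    by (rule graph_ob_cases)
  have "fst (fst H c) = fst f c"
    using pr1 c unfolding feq_def fcomp_def graph_pr1_def Cone_map_def by (simp add: case_prod_beta)
  then have "c1 = fst f c"
    by (simp add: Hc graph_point_def)
  with y Hc show thesis
    using that by blast
qed

lemma snd_H_eq:
  assumes c: "c \<in> carrier (deg0 R12)" and x: "x \<in> carrier (deg1 R12)"
  shows "snd H (c, x) =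
    (fst H c, fst H (c \<oplus>\<^bsub>deg0 R12\<^esub> diff R12 x), (fst f c, snd f x), (fst g c, snd g x))"
proof -
  have "Dom Gr (snd H (c, x)) = fst H c"
    "Cod Gr (snd H (c, x)) = fst H (c \<oplus>\<^bsub>deg0 R12\<^esub> diff R12 x)"
    using H_functor c x unfolding is_functor_def by auto
  moreover have "snd graph_pr1 (snd H (c, x)) = (fst f c, snd f x)"
    "snd graph_pr2 (snd H (c, x)) = (fst g c, snd g x)"
    using pr1 pr2 c x unfolding feq_def fcomp_def Cone_map_def by auto
  ultimately show ?thesis
    unfolding graph_pr1_def graph_pr2_def by (cases "snd H (c, x)") auto
qed

lemma H_arrow_lift:
  assumes c: "c \<in> carrier (deg0 R12)" and v: "v \<in> Ar Gr" and dom_v: "Dom Gr v = fst H c"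
  obtains x where "x \<in> carrier (deg1 R12)" "snd H (c, x) = v"
proof -
  have "v \<in> snd H ` Ar (Cone R12)"
    using H_ar_bij v by (simp add: bij_betw_def)
  then obtain c' x where c': "c' \<in> carrier (deg0 R12)" and x: "x \<in> carrier (deg1 R12)"
    and v_eq: "v = snd H (c', x)"
    by auto
  have "fst H c' = fst H c"
    using dom_v c' x by (simp add: v_eq snd_H_eq)
  then have "c' = c"
    using inj_onD[OF bij_betw_imp_inj_on[OF H_ob_bij]] c c' by blast
  with x v_eq show thesis
    using that by blast
qed

lemma pair_inj:
  assumes x: "x \<in> carrier (deg1 R12)" and x': "x' \<in> carrier (deg1 R12)"
    and "snd f x = snd f x'" and "snd g x = snd g x'"
  shows "x = x'"
proof -
  let ?z = "\<zero>\<^bsub>deg0 R12\<^esub>"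
  have "snd H (?z, x) \<in> Ar Gr" "snd H (?z, x') \<in> Ar Gr"
    using H_functor x x' unfolding is_functor_def by auto
  then have "fst H (?z \<oplus>\<^bsub>deg0 R12\<^esub> diff R12 x) = fst H (?z \<oplus>\<^bsub>deg0 R12\<^esub> diff R12 x')"
    using assms graph_arrow_target_unique by (simp add: snd_H_eq)
  then have "snd H (?z, x) = snd H (?z, x')"
    using assms by (simp add: snd_H_eq)
  then show "x = x'"
    using H_ar_bij x x' unfolding bij_betw_def by (auto dest: inj_onD)
qed

lemma pair_surj:
  assumes x1: "x1 \<in> carrier (deg1 R1)" and x2: "x2 \<in> carrier (deg1 R2)"
  shows "\<exists>x\<in>carrier (deg1 R12). snd f x = x1 \<and> snd g x = x2"
proof -
  let ?z = "\<zero>\<^bsub>deg0 R12\<^esub>" and ?c1 = "fst f \<zero>\<^bsub>deg0 R12\<^esub>"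
  obtain y where y: "y \<in> carrier (deg1 R2)" and Hz: "fst H ?z = graph_point ?c1 y"
    using H_ob_cases[of ?z] by auto
  define y' where "y' = \<ominus>\<^bsub>deg1 R2\<^esub> Phi_arr ?c1 x1 \<oplus>\<^bsub>deg1 R2\<^esub> (y \<oplus>\<^bsub>deg1 R2\<^esub> x2)"
  have y': "y' \<in> carrier (deg1 R2)"
    using x1 y x2 Phi_arr(2) by (simp add: y'_def)
  let ?v = "(graph_point ?c1 y, graph_point (?c1 \<oplus>\<^bsub>deg0 R1\<^esub> diff R1 x1) y',
    (?c1, x1), (fst \<Phi> ?c1 \<oplus>\<^bsub>deg0 R2\<^esub> diff R2 y, x2))"
  have "?v \<in> Ar Gr"
    using x1 x2 y y' Phi_arr(2) by (subst graph_arrow_iff) (auto simp: y'_def G.cod.I.r_neg2)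
  moreover have "Dom Gr ?v = fst H ?z"
    using Hz by simp
  ultimately obtain x where x: "x \<in> carrier (deg1 R12)" and "snd H (?z, x) = ?v"
    by (metis H_arrow_lift F.dom.C.zero_closed)
  then have "snd f x = x1 \<and> snd g x = x2"
    unfolding snd_H_eq[OF F.dom.C.zero_closed x] by simp
  with x show ?thesis
    by blast
qed

lemma pair_bij:
  "bij_betw (\<lambda>x. (snd f x, snd g x)) (carrier (deg1 R12)) (carrier (deg1 R1) \<times> carrier (deg1 R2))"
  by (rule bij_betwI') (auto dest: pair_inj pair_surj)

lemma f0_surj: "fst f ` carrier (deg0 R12) = carrier (deg0 R1)"
proof (intro equalityI subsetI)
  fix c1 assume c1: "c1 \<in> carrier (deg0 R1)"
  have "graph_point c1 \<zero>\<^bsub>deg1 R2\<^esub> \<in> fst H ` carrier (deg0 R12)"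
    using H_ob_bij graph_point_in_graph_ob[OF c1] unfolding bij_betw_def by simp
  then obtain c where c: "c \<in> carrier (deg0 R12)" and Hc: "graph_point c1 \<zero>\<^bsub>deg1 R2\<^esub> = fst H c"
    by (rule imageE)
  obtain y where "fst H c = graph_point (fst f c) y"
    using H_ob_cases[OF c] by blast
  with Hc have "c1 = fst f c"
    by simp
  from this c show "c1 \<in> fst f ` carrier (deg0 R12)"
    by (rule image_eqI)
next
  fix c1 assume "c1 \<in> fst f ` carrier (deg0 R12)"
  then show "c1 \<in> carrier (deg0 R1)"
    by auto
qed

lemma H_full:
  assumes c: "c \<in> carrier (deg0 R12)" and c': "c' \<in> carrier (deg0 R12)"
    and y1: "y1 \<in> carrier (deg1 R1)" and e: "fst f c' = fst f c \<oplus>\<^bsub>deg0 R1\<^esub> diff R1 y1"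
  shows "\<exists>x\<in>carrier (deg1 R12). snd f x = y1 \<and> c' = c \<oplus>\<^bsub>deg0 R12\<^esub> diff R12 x"
proof -
  obtain \<eta> where \<eta>: "\<eta> \<in> carrier (deg1 R2)" and Hc: "fst H c = graph_point (fst f c) \<eta>"
    using H_ob_cases[OF c] by blast
  obtain \<eta>' where \<eta>': "\<eta>' \<in> carrier (deg1 R2)" and Hc': "fst H c' = graph_point (fst f c') \<eta>'"
    using H_ob_cases[OF c'] by blast
  define x2 where "x2 = \<ominus>\<^bsub>deg1 R2\<^esub> \<eta> \<oplus>\<^bsub>deg1 R2\<^esub> (Phi_arr (fst f c) y1 \<oplus>\<^bsub>deg1 R2\<^esub> \<eta>')"
  let ?v = "(fst H c, fst H c', (fst f c, y1), (fst \<Phi> (fst f c) \<oplus>\<^bsub>deg0 R2\<^esub> diff R2 \<eta>, x2))"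
  have "?v \<in> Ar Gr"
    unfolding Hc Hc' using c c' y1 \<eta> \<eta>' Phi_arr(2)
    by (subst graph_arrow_iff) (auto simp: x2_def e G.cod.I.r_neg2)
  moreover have "Dom Gr ?v = fst H c"
    by simp
  ultimately obtain x where x: "x \<in> carrier (deg1 R12)" and Hx: "snd H (c, x) = ?v"
    by (rule H_arrow_lift[OF c])
  have "fst H (c \<oplus>\<^bsub>deg0 R12\<^esub> diff R12 x) = fst H c'" and "snd f x = y1"
    using Hx unfolding snd_H_eq[OF c x] by simp_all
  moreover have "c' = c \<oplus>\<^bsub>deg0 R12\<^esub> diff R12 x"
    using inj_onD[OF bij_betw_imp_inj_on[OF H_ob_bij]] c c' x calculation(1) by simp
  ultimately show ?thesis
    using x by blast
qed

lemma H_faithful: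
  assumes c: "c \<in> carrier (deg0 R12)" and x: "x \<in> carrier (deg1 R12)" and x': "x' \<in> carrier (deg1 R12)"
    and f1: "snd f x = snd f x'" and d: "c \<oplus>\<^bsub>deg0 R12\<^esub> diff R12 x = c \<oplus>\<^bsub>deg0 R12\<^esub> diff R12 x'"
  shows "x = x'"
proof (rule pair_inj[OF x x' f1])
  have "snd H (c, x) \<in> Ar Gr" "snd H (c, x') \<in> Ar Gr"
    using H_functor c x x' unfolding is_functor_def by auto
  then have "(fst H c, fst H (c \<oplus>\<^bsub>deg0 R12\<^esub> diff R12 x), (fst f c, snd f x), (fst g c, snd g x)) \<in> Ar Gr"
    "(fst H c, fst H (c \<oplus>\<^bsub>deg0 R12\<^esub> diff R12 x), (fst f c, snd f x), (fst g c, snd g x')) \<in> Ar Gr"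
    unfolding snd_H_eq[OF c x] snd_H_eq[OF c x'] f1 d .
  then show "snd g x = snd g x'"
    using graph_arrow_snd_unique by blast
qed

lemma cone_fully_faithful_f: "cone_fully_faithful R12 R1 f"
  unfolding cone_fully_faithful_def
proof (intro ballI impI ex_ex1I)
  fix c c' y1
  assume "c \<in> carrier (deg0 R12)" "c' \<in> carrier (deg0 R12)" "y1 \<in> carrier (deg1 R1)"
    and "fst f c' = fst f c \<oplus>\<^bsub>deg0 R1\<^esub> diff R1 y1"
  then show "\<exists>x. x \<in> carrier (deg1 R12) \<and> snd f x = y1 \<and> c' = c \<oplus>\<^bsub>deg0 R12\<^esub> diff R12 x"
    and "\<And>x x'. x \<in> carrier (deg1 R12) \<and> snd f x = y1 \<and> c' = c \<oplus>\<^bsub>deg0 R12\<^esub> diff R12 x \<Longrightarrow>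
      x' \<in> carrier (deg1 R12) \<and> snd f x' = y1 \<and> c' = c \<oplus>\<^bsub>deg0 R12\<^esub> diff R12 x' \<Longrightarrow> x = x'"
    using H_full H_faithful by (blast, metis)
qed

end

lemma (in dg_corr) dg_admissible_if_cat_admissible:
  assumes "cat_admissible (Cone R1) (Cone R12) (Cone R2) (Cone_map f) (Cone_map g)"
  shows "dg_admissible R1 R12 R2 f g"
proof -
  obtain \<Phi> H where "is_functor (Cone R1) (Cone R2) \<Phi>"
    and "cat_iso (Cone R12) (graph_cat (Cone R1) (Cone R2) \<Phi>) H"
    and "feq (Cone R12) (fcomp graph_pr1 H) (Cone_map f)"
    and "feq (Cone R12) (fcomp graph_pr2 H) (Cone_map g)"
    using assms unfolding cat_admissible_def by blast
  then interpret graph_corr R1 R12 R2 f g \<Phi> H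
    by unfold_locales
  show ?thesis
    unfolding dg_admissible_iff using cone_fully_faithful_f f0_surj pair_bij by blast
qed

section \<open>An admissible correspondence is isomorphic to a graph\<close>

locale admissible_corr = dg_corr +
  assumes admissible: "dg_admissible R1 R12 R2 f g"
begin

lemma cone_fully_faithful_f: "cone_fully_faithful R12 R1 f"
  and f0_surj: "fst f ` carrier (deg0 R12) = carrier (deg0 R1)"
  and pair_bij: "bij_betw (\<lambda>x. (snd f x, snd g x)) (carrier (deg1 R12)) (carrier (deg1 R1) \<times> carrier (deg1 R2))"
  using admissible unfolding dg_admissible_iff by blast+

lemma pair_inj:
  assumes "x \<in> carrier (deg1 R12)" and "x' \<in> carrier (deg1 R12)"
    and "snd f x = snd f x'" and "snd g x = snd g x'"
  shows "x = x'"
proof (rule inj_onD[OF bij_betw_imp_inj_on[OF pair_bij]])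
  show "(snd f x, snd g x) = (snd f x', snd g x')"
    using assms by simp
qed (use assms in simp_all)

lemma pair_surj:
  assumes "x1 \<in> carrier (deg1 R1)" and "x2 \<in> carrier (deg1 R2)"
  obtains x where "x \<in> carrier (deg1 R12)" "snd f x = x1" "snd g x = x2"
proof -
  have "(x1, x2) \<in> (\<lambda>x. (snd f x, snd g x)) ` carrier (deg1 R12)"
    using pair_bij assms unfolding bij_betw_def by simp
  then obtain x where "x \<in> carrier (deg1 R12)" "(x1, x2) = (snd f x, snd g x)"
    by (rule imageE)
  with that show thesis
    by simp
qed

definition sec :: "'a \<Rightarrow> 'c" where
  "sec c1 = (SOME c. c \<in> carrier (deg0 R12) \<and> fst f c = c1)"

lemma sec:
  assumes "c1 \<in> carrier (deg0 R1)"
  shows "sec c1 \<in> carrier (deg0 R12)" and "fst f (sec c1) = c1"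
proof -
  have "\<exists>c. c \<in> carrier (deg0 R12) \<and> fst f c = c1"
    using f0_surj assms by (metis image_iff)
  from someI_ex[OF this] show "sec c1 \<in> carrier (deg0 R12)" and "fst f (sec c1) = c1"
    unfolding sec_def by blast+
qed

text \<open>lift c c' y is the arrow c \<rightarrow> c' of Cone(R12) lying over the arrow (f0 c, y) of Cone(R1);
  it is meaningful only when f0 c' = f0 c + dy, where full faithfulness makes it unique.\<close>

definition lift :: "'c \<Rightarrow> 'c \<Rightarrow> 'b \<Rightarrow> 'd" where
  "lift c c' y = (THE x. x \<in> carrier (deg1 R12) \<and> snd f x = y \<and> c' = c \<oplus>\<^bsub>deg0 R12\<^esub> diff R12 x)"

lemma lift:
  assumes "c \<in> carrier (deg0 R12)" "c' \<in> carrier (deg0 R12)" "y \<in> carrier (deg1 R1)"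
    and "fst f c' = fst f c \<oplus>\<^bsub>deg0 R1\<^esub> diff R1 y"
  shows "lift c c' y \<in> carrier (deg1 R12)" "snd f (lift c c' y) = y"
    and "c' = c \<oplus>\<^bsub>deg0 R12\<^esub> diff R12 (lift c c' y)"
proof -
  have "\<exists>!x. x \<in> carrier (deg1 R12) \<and> snd f x = y \<and> c' = c \<oplus>\<^bsub>deg0 R12\<^esub> diff R12 x"
    using cone_fully_faithful_f assms unfolding cone_fully_faithful_def by blast
  from theI'[OF this] show "lift c c' y \<in> carrier (deg1 R12)" "snd f (lift c c' y) = y"
    and "c' = c \<oplus>\<^bsub>deg0 R12\<^esub> diff R12 (lift c c' y)"
    unfolding lift_def by blast+
qed

lemma lift_eq:
  assumes c: "c \<in> carrier (deg0 R12)" and x: "x \<in> carrier (deg1 R12)"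
  shows "lift c (c \<oplus>\<^bsub>deg0 R12\<^esub> diff R12 x) (snd f x) = x"
proof -
  have "\<exists>!x'. x' \<in> carrier (deg1 R12) \<and> snd f x' = snd f x \<and>
      c \<oplus>\<^bsub>deg0 R12\<^esub> diff R12 x = c \<oplus>\<^bsub>deg0 R12\<^esub> diff R12 x'"
    using cone_fully_faithful_f c x unfolding cone_fully_faithful_def by simp
  then show ?thesis
    unfolding lift_def by (rule the1_equality) (use x in simp)
qed

lemma lift_add:
  assumes c: "c \<in> carrier (deg0 R12)" and c': "c' \<in> carrier (deg0 R12)" and c'': "c'' \<in> carrier (deg0 R12)"
    and y: "y \<in> carrier (deg1 R1)" and y': "y' \<in> carrier (deg1 R1)"
    and e: "fst f c' = fst f c \<oplus>\<^bsub>deg0 R1\<^esub> diff R1 y"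
    and e': "fst f c'' = fst f c' \<oplus>\<^bsub>deg0 R1\<^esub> diff R1 y'"
  shows "lift c c'' (y \<oplus>\<^bsub>deg1 R1\<^esub> y') = lift c c' y \<oplus>\<^bsub>deg1 R12\<^esub> lift c' c'' y'"
proof -
  define z where "z = lift c c' y"
  define z' where "z' = lift c' c'' y'"
  have z: "z \<in> carrier (deg1 R12)" "snd f z = y" "c' = c \<oplus>\<^bsub>deg0 R12\<^esub> diff R12 z"
    unfolding z_def using lift[OF c c' y e] by blast+
  have z': "z' \<in> carrier (deg1 R12)" "snd f z' = y'" "c'' = c' \<oplus>\<^bsub>deg0 R12\<^esub> diff R12 z'"
    unfolding z'_def using lift[OF c' c'' y' e'] by blast+
  have c''_eq: "c'' = c \<oplus>\<^bsub>deg0 R12\<^esub> diff R12 (z \<oplus>\<^bsub>deg1 R12\<^esub> z')"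
    using c z z' by (simp add: F.dom.C.a_assoc)
  have y_eq: "y \<oplus>\<^bsub>deg1 R1\<^esub> y' = snd f (z \<oplus>\<^bsub>deg1 R12\<^esub> z')"
    using z z' by simp
  show "lift c c'' (y \<oplus>\<^bsub>deg1 R1\<^esub> y') = z \<oplus>\<^bsub>deg1 R12\<^esub> z'"
    unfolding c''_eq y_eq by (rule lift_eq) (use c z(1) z'(1) in simp_all)
qed

lemma lift_zero: "c \<in> carrier (deg0 R12) \<Longrightarrow> lift c c \<zero>\<^bsub>deg1 R1\<^esub> = \<zero>\<^bsub>deg1 R12\<^esub>"
  using lift_eq[of c "\<zero>\<^bsub>deg1 R12\<^esub>"] by simp

text \<open>\<Phi> moves an arrow of Cone(R1) to Cone(R12) along the section sec, which is possible by
  full faithfulness of Cone(f), and then applies Cone(g).\<close>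

definition \<Phi> where
  "\<Phi> = (\<lambda>c1. fst g (sec c1),
        \<lambda>(c1, x1). (fst g (sec c1), snd g (lift (sec c1) (sec (c1 \<oplus>\<^bsub>deg0 R1\<^esub> diff R1 x1)) x1)))"

lemma Phi_simps:
  "fst \<Phi> c1 = fst g (sec c1)"
  "snd \<Phi> (c1, x1) = (fst g (sec c1), snd g (lift (sec c1) (sec (c1 \<oplus>\<^bsub>deg0 R1\<^esub> diff R1 x1)) x1))"
  by (simp_all add: \<Phi>_def)

lemma lift_sec:
  assumes c1: "c1 \<in> carrier (deg0 R1)" and x1: "x1 \<in> carrier (deg1 R1)"
  shows "lift (sec c1) (sec (c1 \<oplus>\<^bsub>deg0 R1\<^esub> diff R1 x1)) x1 \<in> carrier (deg1 R12)"
    and "snd f (lift (sec c1) (sec (c1 \<oplus>\<^bsub>deg0 R1\<^esub> diff R1 x1)) x1) = x1"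
    and "sec (c1 \<oplus>\<^bsub>deg0 R1\<^esub> diff R1 x1) =
      sec c1 \<oplus>\<^bsub>deg0 R12\<^esub> diff R12 (lift (sec c1) (sec (c1 \<oplus>\<^bsub>deg0 R1\<^esub> diff R1 x1)) x1)"
proof -
  have c1': "c1 \<oplus>\<^bsub>deg0 R1\<^esub> diff R1 x1 \<in> carrier (deg0 R1)"
    using c1 x1 by simp
  have "fst f (sec (c1 \<oplus>\<^bsub>deg0 R1\<^esub> diff R1 x1)) = fst f (sec c1) \<oplus>\<^bsub>deg0 R1\<^esub> diff R1 x1"
    using c1 c1' by (simp add: sec)
  from lift[OF sec(1)[OF c1] sec(1)[OF c1'] x1 this]
  show "lift (sec c1) (sec (c1 \<oplus>\<^bsub>deg0 R1\<^esub> diff R1 x1)) x1 \<in> carrier (deg1 R12)"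
    and "snd f (lift (sec c1) (sec (c1 \<oplus>\<^bsub>deg0 R1\<^esub> diff R1 x1)) x1) = x1"
    and "sec (c1 \<oplus>\<^bsub>deg0 R1\<^esub> diff R1 x1) =
      sec c1 \<oplus>\<^bsub>deg0 R12\<^esub> diff R12 (lift (sec c1) (sec (c1 \<oplus>\<^bsub>deg0 R1\<^esub> diff R1 x1)) x1)" .
qed

lemma is_functor_Phi: "is_functor (Cone R1) (Cone R2) \<Phi>"
  unfolding is_functor_def
proof (intro conjI ballI impI)
  fix c1 assume "c1 \<in> Ob (Cone R1)"
  then show "fst \<Phi> c1 \<in> Ob (Cone R2)"
    by (simp add: Phi_simps sec)
next
  fix u assume "u \<in> Ar (Cone R1)"
  then obtain c1 x1 where u: "u = (c1, x1)" and c1: "c1 \<in> carrier (deg0 R1)"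
    and x1: "x1 \<in> carrier (deg1 R1)" by auto
  define l where "l = lift (sec c1) (sec (c1 \<oplus>\<^bsub>deg0 R1\<^esub> diff R1 x1)) x1"
  note l = lift_sec[OF c1 x1, folded l_def]
  have "snd \<Phi> u = (fst g (sec c1), snd g l)"
    by (simp add: Phi_simps u l_def)
  then show "snd \<Phi> u \<in> Ar (Cone R2)" "Dom (Cone R2) (snd \<Phi> u) = fst \<Phi> (Dom (Cone R1) u)"
    "Cod (Cone R2) (snd \<Phi> u) = fst \<Phi> (Cod (Cone R1) u)"
    using c1 l by (simp_all add: Phi_simps u sec)
next
  fix c1 assume "c1 \<in> Ob (Cone R1)"
  then show "snd \<Phi> (Idn (Cone R1) c1) = Idn (Cone R2) (fst \<Phi> c1)"
    by (simp add: Phi_simps sec lift_zero)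
next
  fix u v assume "u \<in> Ar (Cone R1)" "v \<in> Ar (Cone R1)" and uv: "Cod (Cone R1) u = Dom (Cone R1) v"
  then obtain c1 x1 c1' x1' where u: "u = (c1, x1)" "c1 \<in> carrier (deg0 R1)" "x1 \<in> carrier (deg1 R1)"
    and v: "v = (c1', x1')" "c1' \<in> carrier (deg0 R1)" "x1' \<in> carrier (deg1 R1)" by auto
  have c1': "c1' = c1 \<oplus>\<^bsub>deg0 R1\<^esub> diff R1 x1"
    using uv u v by simp
  define l where "l = lift (sec c1) (sec c1') x1"
  define l' where "l' = lift (sec c1') (sec (c1' \<oplus>\<^bsub>deg0 R1\<^esub> diff R1 x1')) x1'"
  have l: "l \<in> carrier (deg1 R12)" and l': "l' \<in> carrier (deg1 R12)"
    using lift_sec(1)[OF u(2,3)] lift_sec(1)[OF v(2,3)] by (simp_all add: l_def l'_def c1')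
  have "c1 \<oplus>\<^bsub>deg0 R1\<^esub> diff R1 (x1 \<oplus>\<^bsub>deg1 R1\<^esub> x1') = c1' \<oplus>\<^bsub>deg0 R1\<^esub> diff R1 x1'"
    using u v by (simp add: c1' F.cod.C.a_assoc)
  moreover have "lift (sec c1) (sec (c1' \<oplus>\<^bsub>deg0 R1\<^esub> diff R1 x1')) (x1 \<oplus>\<^bsub>deg1 R1\<^esub> x1') = l \<oplus>\<^bsub>deg1 R12\<^esub> l'"
    unfolding l_def l'_def using u v by (intro lift_add) (simp_all add: sec c1')
  ultimately show "snd \<Phi> (Cmp (Cone R1) v u) = Cmp (Cone R2) (snd \<Phi> v) (snd \<Phi> u)"
    using u v l l' by (simp add: Phi_simps l_def l'_def c1')
qed

end

sublocale admissible_corr \<subseteq> Phi: cone_functor R1 R2 \<Phi>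
  by unfold_locales (rule is_functor_Phi)

context admissible_corr
begin

text \<open>The object c of Cone(R12) goes to (f0 c, g0 c, \<psi>), where \<psi> : \<Phi>(f0 c) \<rightarrow> g0 c is the image
  under Cone(g) of the unique arrow sec(f0 c) \<rightarrow> c of Cone(R12) lying over the identity of f0 c.\<close>

definition H_ob :: "'c \<Rightarrow> 'a \<times> 'e \<times> 'e \<times> 'f" where
  "H_ob c = Phi.graph_point (fst f c) (snd g (lift (sec (fst f c)) c \<zero>\<^bsub>deg1 R1\<^esub>))"

definition H where
  "H = (H_ob, \<lambda>(c, x). (H_ob c, H_ob (c \<oplus>\<^bsub>deg0 R12\<^esub> diff R12 x), (fst f c, snd f x), (fst g c, snd g x)))"

lemma lift_from_sec:
  assumes c: "c \<in> carrier (deg0 R12)"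
  shows "lift (sec (fst f c)) c \<zero>\<^bsub>deg1 R1\<^esub> \<in> carrier (deg1 R12)"
    and "snd f (lift (sec (fst f c)) c \<zero>\<^bsub>deg1 R1\<^esub>) = \<zero>\<^bsub>deg1 R1\<^esub>"
    and "c = sec (fst f c) \<oplus>\<^bsub>deg0 R12\<^esub> diff R12 (lift (sec (fst f c)) c \<zero>\<^bsub>deg1 R1\<^esub>)"
  using lift[OF sec(1) c F.cod.I.zero_closed] c by (simp_all add: sec)

lemma H_ob_components:
  assumes c: "c \<in> carrier (deg0 R12)"
  shows "fst (H_ob c) = fst f c" and "fst (snd (H_ob c)) = fst g c"
proof -
  define n where "n = lift (sec (fst f c)) c \<zero>\<^bsub>deg1 R1\<^esub>"
  note n = lift_from_sec[OF c, folded n_def]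
  have "fst g c = fst g (sec (fst f c) \<oplus>\<^bsub>deg0 R12\<^esub> diff R12 n)"
    using n(3) by (rule arg_cong)
  also have "\<dots> = fst g (sec (fst f c)) \<oplus>\<^bsub>deg0 R2\<^esub> diff R2 (snd g n)"
    using c n(1) by (simp add: sec)
  finally show "fst (H_ob c) = fst f c" and "fst (snd (H_ob c)) = fst g c"
    by (simp_all add: H_ob_def Phi.graph_point_def Phi_simps n_def)
qed

lemma H_ob_bij: "bij_betw H_ob (carrier (deg0 R12)) (graph_ob (Cone R1) (Cone R2) \<Phi>)"
proof (rule bij_betwI')
  fix c c' assume c: "c \<in> carrier (deg0 R12)" and c': "c' \<in> carrier (deg0 R12)"
  show "(H_ob c = H_ob c') = (c = c')"
  proof
    assume "H_ob c = H_ob c'"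
    then have f0: "fst f c = fst f c'"
      and "snd g (lift (sec (fst f c)) c \<zero>\<^bsub>deg1 R1\<^esub>) = snd g (lift (sec (fst f c')) c' \<zero>\<^bsub>deg1 R1\<^esub>)"
      unfolding H_ob_def Phi.graph_point_eq_iff by blast+
    then have "lift (sec (fst f c)) c \<zero>\<^bsub>deg1 R1\<^esub> = lift (sec (fst f c')) c' \<zero>\<^bsub>deg1 R1\<^esub>"
      using lift_from_sec[OF c] lift_from_sec[OF c'] by (intro pair_inj) simp_all
    then show "c = c'"
      using lift_from_sec(3)[OF c] lift_from_sec(3)[OF c'] f0 by metis
  qed simp
next
  fix c assume "c \<in> carrier (deg0 R12)"
  then show "H_ob c \<in> graph_ob (Cone R1) (Cone R2) \<Phi>"
    unfolding H_ob_def using lift_from_sec by (intro Phi.graph_point_in_graph_ob) simp_all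
next
  fix s assume "s \<in> graph_ob (Cone R1) (Cone R2) \<Phi>"
  then obtain c1 y where c1: "c1 \<in> carrier (deg0 R1)" and y: "y \<in> carrier (deg1 R2)"
    and s: "s = Phi.graph_point c1 y"
    by (rule Phi.graph_ob_cases)
  obtain n where n: "n \<in> carrier (deg1 R12)" "snd f n = \<zero>\<^bsub>deg1 R1\<^esub>" "snd g n = y"
    using pair_surj[OF F.cod.I.zero_closed y] by blast
  define c where "c = sec c1 \<oplus>\<^bsub>deg0 R12\<^esub> diff R12 n"
  have c: "c \<in> carrier (deg0 R12)" and f0c: "fst f c = c1"
    using c1 n by (simp_all add: c_def sec flip: F.diff_hom)
  have "lift (sec c1) c \<zero>\<^bsub>deg1 R1\<^esub> = n"
    using lift_eq[OF sec(1)[OF c1] n(1)] n(2) by (simp add: c_def)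
  then have "s = H_ob c"
    by (simp add: H_ob_def s f0c n(3))
  with c show "\<exists>c\<in>carrier (deg0 R12). s = H_ob c"
    by blast
qed

lemma lift_square:
  assumes c: "c \<in> carrier (deg0 R12)" and x: "x \<in> carrier (deg1 R12)"
  defines "c' \<equiv> c \<oplus>\<^bsub>deg0 R12\<^esub> diff R12 x"
  shows "lift (sec (fst f c)) (sec (fst f c')) (snd f x) \<oplus>\<^bsub>deg1 R12\<^esub> lift (sec (fst f c')) c' \<zero>\<^bsub>deg1 R1\<^esub> =
    lift (sec (fst f c)) c \<zero>\<^bsub>deg1 R1\<^esub> \<oplus>\<^bsub>deg1 R12\<^esub> x"
proof -
  have c': "c' \<in> carrier (deg0 R12)" and e: "fst f c' = fst f c \<oplus>\<^bsub>deg0 R1\<^esub> diff R1 (snd f x)"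
    using c x by (simp_all add: c'_def)
  have "lift (sec (fst f c)) c' (snd f x \<oplus>\<^bsub>deg1 R1\<^esub> \<zero>\<^bsub>deg1 R1\<^esub>) =
      lift (sec (fst f c)) (sec (fst f c')) (snd f x) \<oplus>\<^bsub>deg1 R12\<^esub> lift (sec (fst f c')) c' \<zero>\<^bsub>deg1 R1\<^esub>"
    using c c' x e by (intro lift_add) (simp_all add: sec)
  moreover have "lift (sec (fst f c)) c' (\<zero>\<^bsub>deg1 R1\<^esub> \<oplus>\<^bsub>deg1 R1\<^esub> snd f x) =
      lift (sec (fst f c)) c \<zero>\<^bsub>deg1 R1\<^esub> \<oplus>\<^bsub>deg1 R12\<^esub> lift c c' (snd f x)"
    using c c' x e by (intro lift_add) (simp_all add: sec)
  moreover have "lift c c' (snd f x) = x"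
    unfolding c'_def using c x by (rule lift_eq)
  ultimately show ?thesis
    using x by simp
qed

lemma H_arrow:
  assumes c: "c \<in> carrier (deg0 R12)" and x: "x \<in> carrier (deg1 R12)"
  shows "snd H (c, x) \<in> Ar Phi.Gr"
proof -
  define c' where "c' = c \<oplus>\<^bsub>deg0 R12\<^esub> diff R12 x"
  have c': "c' \<in> carrier (deg0 R12)" and e: "fst f c' = fst f c \<oplus>\<^bsub>deg0 R1\<^esub> diff R1 (snd f x)"
    using c x by (simp_all add: c'_def)
  define n where "n = lift (sec (fst f c)) c \<zero>\<^bsub>deg1 R1\<^esub>"
  define n' where "n' = lift (sec (fst f c')) c' \<zero>\<^bsub>deg1 R1\<^esub>"
  have n: "n \<in> carrier (deg1 R12)" and n': "n' \<in> carrier (deg1 R12)"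
    using lift_from_sec(1)[OF c] lift_from_sec(1)[OF c'] by (simp_all add: n_def n'_def)
  have H_cx: "snd H (c, x) = (Phi.graph_point (fst f c) (snd g n), Phi.graph_point (fst f c') (snd g n'),
      (fst f c, snd f x), (fst \<Phi> (fst f c) \<oplus>\<^bsub>deg0 R2\<^esub> diff R2 (snd g n), snd g x))"
    using H_ob_components(2)[OF c]
    by (simp add: H_def H_ob_def Phi.graph_point_def n_def n'_def c'_def)
  have "Phi.Phi_arr (fst f c) (snd f x) = snd g (lift (sec (fst f c)) (sec (fst f c')) (snd f x))"
    by (simp add: Phi.Phi_arr_def Phi_simps e)
  then have "Phi.Phi_arr (fst f c) (snd f x) \<oplus>\<^bsub>deg1 R2\<^esub> snd g n' = snd g n \<oplus>\<^bsub>deg1 R2\<^esub> snd g x"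
    using lift_square[OF c x] c c' x n n' lift_sec(1)[OF _ F.h1.hom_closed[OF x], of "fst f c"]
    by (simp add: n_def n'_def c'_def e flip: G.h1.hom_add)
  then show ?thesis
    unfolding H_cx using c c' x n n' e
    by (subst Phi.graph_arrow_iff) auto
qed

lemma H_ar_bij: "bij_betw (snd H) (Ar (Cone R12)) (Ar Phi.Gr)"
proof (rule bij_betwI')
  fix u u' assume "u \<in> Ar (Cone R12)" "u' \<in> Ar (Cone R12)"
  then obtain c x c' x' where u: "u = (c, x)" "c \<in> carrier (deg0 R12)" "x \<in> carrier (deg1 R12)"
    and u': "u' = (c', x')" "c' \<in> carrier (deg0 R12)" "x' \<in> carrier (deg1 R12)" by auto
  show "(snd H u = snd H u') = (u = u')"
  proof
    assume "snd H u = snd H u'"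
    then have "H_ob c = H_ob c'" "snd f x = snd f x'" "snd g x = snd g x'"
      by (simp_all add: H_def u u')
    then show "u = u'"
      using u u' H_ob_bij pair_inj by (auto simp: bij_betw_def dest: inj_onD)
  qed simp
next
  fix u assume "u \<in> Ar (Cone R12)"
  then show "snd H u \<in> Ar Phi.Gr"
    using H_arrow by auto
next
  fix v assume v: "v \<in> Ar Phi.Gr"
  obtain s t a1 a2 where v_eq: "v = (s, t, a1, a2)"
    by (cases v) auto
  have s: "s \<in> graph_ob (Cone R1) (Cone R2) \<Phi>" and a1: "a1 \<in> Ar (Cone R1)" and a2: "a2 \<in> Ar (Cone R2)"
    and dom_a: "Dom (Cone R1) a1 = fst s" "Dom (Cone R2) a2 = fst (snd s)"
    using v unfolding v_eq Ar_graph_cat by auto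
  obtain c where c: "c \<in> carrier (deg0 R12)" and s_eq: "s = H_ob c"
    using H_ob_bij s unfolding bij_betw_def by auto
  obtain x1 x2 where x1: "x1 \<in> carrier (deg1 R1)" and x2: "x2 \<in> carrier (deg1 R2)"
    and a: "a1 = (fst f c, x1)" "a2 = (fst g c, x2)"
    using a1 a2 dom_a by (auto simp: s_eq H_ob_components[OF c])
  obtain x where x: "x \<in> carrier (deg1 R12)" "snd f x = x1" "snd g x = x2"
    using pair_surj[OF x1 x2] .
  have H_cx: "snd H (c, x) = (s, H_ob (c \<oplus>\<^bsub>deg0 R12\<^esub> diff R12 x), a1, a2)"
    by (simp add: H_def s_eq a x)
  then have "t = H_ob (c \<oplus>\<^bsub>deg0 R12\<^esub> diff R12 x)"
    using v H_arrow[OF c x(1)] unfolding v_eq by (metis Phi.graph_arrow_target_unique)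
  then have "v = snd H (c, x)"
    by (simp add: H_cx v_eq)
  with c x(1) show "\<exists>u\<in>Ar (Cone R12). v = snd H u"
    by auto
qed

lemma is_functor_H: "is_functor (Cone R12) Phi.Gr H"
  unfolding is_functor_def
proof (intro conjI ballI impI)
  fix c assume "c \<in> Ob (Cone R12)"
  then show "fst H c \<in> Ob Phi.Gr"
    using H_ob_bij by (simp add: H_def bij_betw_apply)
next
  fix u assume "u \<in> Ar (Cone R12)"
  then show "snd H u \<in> Ar Phi.Gr" "Dom Phi.Gr (snd H u) = fst H (Dom (Cone R12) u)"
    "Cod Phi.Gr (snd H u) = fst H (Cod (Cone R12) u)"
    using H_arrow by (auto simp: H_def)
next
  fix c assume "c \<in> Ob (Cone R12)"
  then show "snd H (Idn (Cone R12) c) = Idn Phi.Gr (fst H c)"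
    by (simp add: H_def H_ob_components)
next
  fix u v assume "u \<in> Ar (Cone R12)" "v \<in> Ar (Cone R12)" and uv: "Cod (Cone R12) u = Dom (Cone R12) v"
  then obtain c x c' x' where u: "u = (c, x)" "c \<in> carrier (deg0 R12)" "x \<in> carrier (deg1 R12)"
    and v: "v = (c', x')" "c' \<in> carrier (deg0 R12)" "x' \<in> carrier (deg1 R12)" by auto
  have "c' = c \<oplus>\<^bsub>deg0 R12\<^esub> diff R12 x"
    using uv u v by simp
  then show "snd H (Cmp (Cone R12) v u) = Cmp Phi.Gr (snd H v) (snd H u)"
    using u v by (simp add: H_def F.dom.C.a_assoc)
qed

lemma cat_admissible_Cone: "cat_admissible (Cone R1) (Cone R12) (Cone R2) (Cone_map f) (Cone_map g)"
  unfolding cat_admissible_def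
proof (intro exI conjI)
  show "is_functor (Cone R1) (Cone R2) \<Phi>"
    by (rule is_functor_Phi)
  show "cat_iso (Cone R12) Phi.Gr H"
    unfolding cat_iso_iff_bij[OF F.dom.cat_closed_Cone]
    using is_functor_H H_ob_bij H_ar_bij by (simp add: H_def)
  show "feq (Cone R12) (fcomp graph_pr1 H) (Cone_map f)" "feq (Cone R12) (fcomp graph_pr2 H) (Cone_map g)"
    by (auto simp: feq_def fcomp_def graph_pr1_def graph_pr2_def Cone_map_def H_def H_ob_components case_prod_beta)
qed

end

theorem lemma4p7p1:
  fixes R1 :: "('a, 'b) dgr" and R12 :: "('c, 'd) dgr" and R2 :: "('e, 'h) dgr"
    and f :: "('c \<Rightarrow> 'a) \<times> ('d \<Rightarrow> 'b)" and g :: "('c \<Rightarrow> 'e) \<times> ('d \<Rightarrow> 'h)"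
  assumes "dg_ring R1" and "dg_ring R12" and "dg_ring R2"
    and "dg_hom R12 R1 f" and "dg_hom R12 R2 g"
  shows "dg_admissible R1 R12 R2 f g \<longleftrightarrow>
         cat_admissible (Cone R1) (Cone R12) (Cone R2) (Cone_map f) (Cone_map g)"
proof -
  interpret dg_corr R1 R12 R2 f g
    using assms by (simp add: dg_corr_def dg_ring_hom_def dg_ring_hom_axioms_def dg_def)
  show ?thesis
  proof
    assume "dg_admissible R1 R12 R2 f g"
    then interpret admissible_corr R1 R12 R2 f g
      by unfold_locales
    show "cat_admissible (Cone R1) (Cone R12) (Cone R2) (Cone_map f) (Cone_map g)"
      by (rule cat_admissible_Cone)
  qed (rule dg_admissible_if_cat_admissible)
qed

end
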